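(* Let $q\in\mathbb{C}\setminus\{0\}$ and $n\ge 1$. Then $G_{n+1}$ is spanned by elements of the form $a\chi b$ with $a,b\in G_n$ and $\chi\in\{1,\,t_n,\,v_{n+1},\,v_{n+1}t_n\}$. Moreover, $G_{n+1}[0]$ is spanned by elements of the form $a\chi b$ with $a,b\in G_n[0]$ and $\chi\in\{1,\,t_n,\,e_n,\,e_nt_n\}$, where $e_n=v_nv_{n+1}$.
   Context: For $q\in\mathbb{C}\setminus\{0\}$ the Hecke–Clifford algebra $G_n$ is the complex algebra generated by $t_1,\dots,t_{n-1}$ and $v_1,\dots,v_n$ subject to: the braid relations $t_jt_{j+1}t_j=t_{j+1}t_jt_{j+1}$, $t_it_j=t_jt_i$ for $|i-j|\ge2$; the quadratic relation $t_j-t_j^{-1}=q-q^{-1}$; the Clifford relations $v_jv_k+v_kv_j=2\delta_{jk}$; and the mixed relations $t_jv_j=v_{j+1}t_j$, $t_jv_{j+1}=v_jt_j-(q-q^{-1})(v_j-v_{j+1})$, $t_jv_l=v_lt_j$ for $l\neq j,j+1$. The map $v_j\mapsto -v_j$, $t_j\mapsto t_j$ defines an automorphism $\alpha$ of order two; $G_n[0]$ denotes its fixed-point subalgebra (the even part). $G_n$ is regarded as a subalgebra of $G_{n+1}$ via the obvious map on generators (and hence $G_n[0]\subset G_{n+1}[0]$). *)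

theory Defs
  imports Complex_Main "HOL-Library.Poly_Mapping"
begin

datatype gen = T nat | V nat

datatype word = Word "gen list"

instantiation word :: monoid_add
begin
definition zero_word_def: "0 = Word []"
fun plus_word :: "word \<Rightarrow> word \<Rightarrow> word" where
  "plus_word (Word a) (Word b) = Word (a @ b)"
instance
proof
  fix a b c :: word
  show "a + b + c = a + (b + c)" by (cases a; cases b; cases c) simp
  show "0 + a = a" by (cases a) (simp add: zero_word_def)
  show "a + 0 = a" by (cases a) (simp add: zero_word_def)
qed
end

text \<open>The free associative unital complex algebra on the generators.\<close>
type_synonym fa = "word \<Rightarrow>\<^sub>0 complex"

definition sc :: "complex \<Rightarrow> fa" where
  "sc c = Poly_Mapping.single (Word []) c"

definition tt :: "nat \<Rightarrow> fa" where
  "tt j = Poly_Mapping.single (Word [T j]) 1"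

definition vv :: "nat \<Rightarrow> fa" where
  "vv j = Poly_Mapping.single (Word [V j]) 1"

definition gens :: "nat \<Rightarrow> gen set" where
  "gens n = {T j | j. 1 \<le> j \<and> j \<le> n - 1 \<and> j < n} \<union> {V j | j. 1 \<le> j \<and> j \<le> n}"

definition FA :: "nat \<Rightarrow> fa set" where
  "FA n = {x. \<forall>w \<in> Poly_Mapping.keys x. \<exists>l. w = Word l \<and> set l \<subseteq> gens n}"

text \<open>Defining relators of G_n (each relation written as  lhs - rhs).
  The quadratic relation t - t^(-1) = q - q^(-1) is written in the equivalent
  polynomial form t^2 = (q - q^(-1)) t + 1.\<close>
definition relators :: "complex \<Rightarrow> nat \<Rightarrow> fa set" where
  "relators q n =
     {tt j * tt (j+1) * tt j - tt (j+1) * tt j * tt (j+1) | j. 1 \<le> j \<and> j + 1 \<le> n - 1}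
   \<union> {tt i * tt j - tt j * tt i | i j. 1 \<le> i \<and> i < n \<and> 1 \<le> j \<and> j < n \<and> (i + 2 \<le> j \<or> j + 2 \<le> i)}
   \<union> {tt j * tt j - sc (q - inverse q) * tt j - 1 | j. 1 \<le> j \<and> j < n}
   \<union> {vv j * vv k + vv k * vv j - sc (if j = k then 2 else 0) | j k. 1 \<le> j \<and> j \<le> n \<and> 1 \<le> k \<and> k \<le> n}
   \<union> {tt j * vv j - vv (j+1) * tt j | j. 1 \<le> j \<and> j < n}
   \<union> {tt j * vv (j+1) - (vv j * tt j - sc (q - inverse q) * (vv j - vv (j+1))) | j. 1 \<le> j \<and> j < n}
   \<union> {tt j * vv l - vv l * tt j | j l. 1 \<le> j \<and> j < n \<and> 1 \<le> l \<and> l \<le> n \<and> l \<noteq> j \<and> l \<noteq> j + 1}"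

inductive_set ideal_gen :: "fa set \<Rightarrow> fa set \<Rightarrow> fa set" for A S where
  base: "s \<in> S \<Longrightarrow> s \<in> ideal_gen A S"
| zero: "0 \<in> ideal_gen A S"
| add: "x \<in> ideal_gen A S \<Longrightarrow> y \<in> ideal_gen A S \<Longrightarrow> x + y \<in> ideal_gen A S"
| mult: "x \<in> ideal_gen A S \<Longrightarrow> a \<in> A \<Longrightarrow> b \<in> A \<Longrightarrow> a * x * b \<in> ideal_gen A S"

text \<open>The defining ideal of G_n inside the free algebra FA n; G_n = FA n / HCideal q n.\<close>
definition HCideal :: "complex \<Rightarrow> nat \<Rightarrow> fa set" where
  "HCideal q n = ideal_gen (FA n) (relators q n)"

inductive_set cspan :: "fa set \<Rightarrow> fa set" for S where
  zero: "0 \<in> cspan S"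
| base: "s \<in> S \<Longrightarrow> s \<in> cspan S"
| add: "x \<in> cspan S \<Longrightarrow> y \<in> cspan S \<Longrightarrow> x + y \<in> cspan S"
| smult: "x \<in> cspan S \<Longrightarrow> sc c * x \<in> cspan S"

text \<open>The automorphism alpha (v_j \<mapsto> -v_j, t_j \<mapsto> t_j) lifted to the free algebra:
  a word with k letters V gets sign (-1)^k.\<close>
fun nV :: "word \<Rightarrow> nat" where
  "nV (Word l) = length (filter (\<lambda>g. case g of V _ \<Rightarrow> True | T _ \<Rightarrow> False) l)"

definition alpha :: "fa \<Rightarrow> fa" where
  "alpha x = Poly_Mapping.mapp (\<lambda>w c. (-1) ^ nV w * c) x"

text \<open>Representatives in FA n of the even part G_n[0]: elements x whose class is alpha-fixed.\<close>
definition Even :: "complex \<Rightarrow> nat \<Rightarrow> fa set" where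
  "Even q n = {x \<in> FA n. alpha x - x \<in> HCideal q n}"

end

theory Submission
  imports Defs
begin

(*
  Let M be the set of elements of FA (n+1) congruent to combinations of products a \<chi> b
  with a, b \<in> FA n and \<chi> \<in> {1, t_n, v_(n+1), v_(n+1) t_n}. It contains 1 and is stable under
  left multiplication by the generators of G_n. It is stable under v_(n+1), because
  v_(n+1) a = alpha(a) v_(n+1) for a \<in> G_n and the Clifford relations reduce v_(n+1) \<chi>. It is
  stable under t_n by induction on n: a \<in> G_n is a combination of products a' \<chi>' b' over
  G_(n-1), t_n commutes with a', b' \<chi> = \<chi> b'' for some b'' \<in> G_n, and the defining relations
  reduce the sixteen products t_n \<chi>' \<chi>. Hence M = FA (n+1).

  For the even part apply the projection x \<mapsto> (x + alpha x)/2. Writing a = a0 + (a1 v_n) v_n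
  and b = b0 + v_n (v_n b1) with a0, a1 v_n, b0, v_n b1 even, everything reduces to the
  projections of u \<chi> w with u, w \<in> {1, v_n}, which vanish or are congruent to combinations of
  1, t_n, e_n and e_n t_n.
*)

lemma sc_eq_single_0: "sc c = Poly_Mapping.single 0 c"
  by (simp add: sc_def zero_word_def)

lemma sc_0 [simp]: "sc 0 = 0"
  and sc_1 [simp]: "sc 1 = 1"
  and sc_add: "sc (c + d) = sc c + sc d"
  and sc_uminus: "sc (- c) = - sc c"
  and sc_mult: "sc c * sc d = sc (c * d)"
  by (simp_all add: sc_eq_single_0 single_add single_uminus mult_single)

lemma update_eq_add_single:
  "a \<notin> Poly_Mapping.keys f \<Longrightarrow> Poly_Mapping.update a b f = f + Poly_Mapping.single a b"
  by (rule poly_mapping_eqI)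
    (simp add: lookup_add Poly_Mapping.update.rep_eq lookup_single in_keys_iff when_def)

lemma poly_mapping_keys_induct [consumes 1, case_names zero add single]:
  assumes "Poly_Mapping.keys x \<subseteq> S" and "P 0" and "\<And>a b. P a \<Longrightarrow> P b \<Longrightarrow> P (a + b)"
    and "\<And>w c. w \<in> S \<Longrightarrow> P (Poly_Mapping.single w c)"
  shows "P x"
  using assms(1)
proof (induction x rule: update_induct)
  case const
  show ?case by (fact assms(2))
next
  case (update f a b)
  then have "Poly_Mapping.keys (Poly_Mapping.update a b f) = insert a (Poly_Mapping.keys f)"
    by (simp add: keys_update)
  with update show ?case
    by (simp add: update_eq_add_single assms(3,4))
qed

lemma sc_commute: "sc c * x = x * sc c"
  using subset_UNIV
proof (induction x rule: poly_mapping_keys_induct)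
  case (single w d)
  show ?case by (simp add: sc_eq_single_0 mult_single mult.commute)
qed (simp_all add: algebra_simps)

lemma mult_sc_left_commute: "x * (sc c * y) = sc c * (x * y)"
  by (metis mult.assoc sc_commute)

definition words :: "nat \<Rightarrow> word set" where
  "words n = {Word l | l. set l \<subseteq> gens n}"

lemma FA_iff_keys: "x \<in> FA n \<longleftrightarrow> Poly_Mapping.keys x \<subseteq> words n"
  by (auto simp: FA_def words_def)

lemma FA_sc [simp]: "sc c \<in> FA n"
  and FA_1 [simp]: "1 \<in> FA n"
  by (auto simp: FA_iff_keys words_def sc_def zero_word_def)

lemma FA_add [simp]: "a \<in> FA n \<Longrightarrow> b \<in> FA n \<Longrightarrow> a + b \<in> FA n"
  using keys_add[of a b] by (auto simp: FA_iff_keys)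

lemma FA_uminus [simp]: "a \<in> FA n \<Longrightarrow> - a \<in> FA n"
  by (simp add: FA_iff_keys)

lemma FA_diff [simp]: "a \<in> FA n \<Longrightarrow> b \<in> FA n \<Longrightarrow> a - b \<in> FA n"
  using keys_diff[of a b] by (auto simp: FA_iff_keys)

lemma FA_mult [simp]:
  assumes "a \<in> FA n" and "b \<in> FA n"
  shows "a * b \<in> FA n"
  unfolding FA_iff_keys
proof
  fix k assume "k \<in> Poly_Mapping.keys (a * b)"
  then obtain x y where "k = x + y" "x \<in> Poly_Mapping.keys a" "y \<in> Poly_Mapping.keys b"
    using keys_mult[of a b] by blast
  with assms obtain l1 l2 where "x = Word l1" "set l1 \<subseteq> gens n" "y = Word l2" "set l2 \<subseteq> gens n"
    unfolding FA_iff_keys words_def by blast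
  with \<open>k = x + y\<close> show "k \<in> words n"
    by (auto simp: words_def)
qed

lemma FA_mono: "n \<le> m \<Longrightarrow> FA n \<subseteq> FA m"
  unfolding FA_def gens_def by fastforce

lemma FA_Suc: "x \<in> FA n \<Longrightarrow> x \<in> FA (n+1)"
  using FA_mono[of n "n+1"] by auto

lemma tt_FA [simp]: "1 \<le> j \<Longrightarrow> j < n \<Longrightarrow> tt j \<in> FA n"
  and vv_FA [simp]: "1 \<le> j \<Longrightarrow> j \<le> n \<Longrightarrow> vv j \<in> FA n"
  by (auto simp: FA_iff_keys tt_def vv_def words_def gens_def)

fun gen :: "gen \<Rightarrow> fa" where
  "gen (T j) = tt j"
| "gen (V j) = vv j"

lemma gen_FA: "g \<in> gens n \<Longrightarrow> gen g \<in> FA n"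
  by (auto simp: gens_def)

lemma single_Cons: "Poly_Mapping.single (Word (g # l)) c = gen g * Poly_Mapping.single (Word l) c"
  by (cases g) (simp_all add: tt_def vv_def mult_single)

lemma FA_induct [consumes 1, case_names zero add sc gen]:
  assumes "x \<in> FA n" and "P 0" and "\<And>a b. P a \<Longrightarrow> P b \<Longrightarrow> P (a + b)" and "\<And>c. P (sc c)"
    and "\<And>g y. g \<in> gens n \<Longrightarrow> y \<in> FA n \<Longrightarrow> P y \<Longrightarrow> P (gen g * y)"
  shows "P x"
proof -
  have P_single: "P (Poly_Mapping.single (Word l) c)" if "set l \<subseteq> gens n" for l c
    using that
  proof (induction l)
    case Nil
    then show ?case using assms(4)[of c] by (simp add: sc_def)
  next
    case (Cons g l)
    then have "Poly_Mapping.single (Word l) c \<in> FA n"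
      by (auto simp: FA_iff_keys words_def)
    with Cons show ?case
      using assms(5)[of g] by (simp add: single_Cons)
  qed
  from assms(1) have "Poly_Mapping.keys x \<subseteq> words n"
    by (simp add: FA_iff_keys)
  then show ?thesis
    by (induction x rule: poly_mapping_keys_induct) (auto simp: words_def intro: assms(2,3) P_single)
qed

section \<open>The parity automorphism\<close>

lemma nV_add: "nV (a + b) = nV a + nV b"
  by (cases a; cases b) simp

lemma lookup_alpha: "Poly_Mapping.lookup (alpha x) k = (-1) ^ nV k * Poly_Mapping.lookup x k"
  by (simp add: alpha_def lookup_mapp when_def in_keys_iff)

lemma alpha_single: "alpha (Poly_Mapping.single w c) = Poly_Mapping.single w ((-1) ^ nV w * c)"
  by (rule poly_mapping_eqI) (simp add: lookup_alpha lookup_single when_def)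

lemma alpha_0 [simp]: "alpha 0 = 0"
  and alpha_add [simp]: "alpha (a + b) = alpha a + alpha b"
  and alpha_uminus [simp]: "alpha (- a) = - alpha a"
  and alpha_diff [simp]: "alpha (a - b) = alpha a - alpha b"
  and alpha_alpha [simp]: "alpha (alpha a) = a"
  by (rule poly_mapping_eqI;
      simp add: lookup_alpha lookup_add lookup_minus algebra_simps power_mult_distrib[symmetric])+

lemma alpha_mult [simp]: "alpha (a * b) = alpha a * alpha b"
  using subset_UNIV
proof (induction a rule: poly_mapping_keys_induct)
  case (single w c)
  show ?case
    using subset_UNIV
  proof (induction b rule: poly_mapping_keys_induct)
    case (single w' d)
    show ?case by (simp add: alpha_single mult_single nV_add power_add algebra_simps)
  qed (simp_all add: algebra_simps)
qed (simp_all add: algebra_simps)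

lemma alpha_sc [simp]: "alpha (sc c) = sc c"
  and alpha_1 [simp]: "alpha 1 = 1"
  and alpha_tt [simp]: "alpha (tt j) = tt j"
  and alpha_vv [simp]: "alpha (vv j) = - vv j"
  by (simp_all add: sc_def tt_def vv_def alpha_single single_uminus flip: sc_1)

lemma alpha_FA [simp]: "a \<in> FA n \<Longrightarrow> alpha a \<in> FA n"
  using keys_mapp_subset[of "\<lambda>w c. (-1) ^ nV w * c" a] by (auto simp: FA_iff_keys alpha_def)

section \<open>Congruence modulo the defining ideal\<close>

lemma HCideal_0 [simp]: "0 \<in> HCideal q m"
  and HCideal_add [simp]: "x \<in> HCideal q m \<Longrightarrow> y \<in> HCideal q m \<Longrightarrow> x + y \<in> HCideal q m"
  and HCideal_mult: "x \<in> HCideal q m \<Longrightarrow> a \<in> FA m \<Longrightarrow> b \<in> FA m \<Longrightarrow> a * x * b \<in> HCideal q m"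
  and HCideal_relator: "r \<in> relators q m \<Longrightarrow> r \<in> HCideal q m"
  by (simp_all add: HCideal_def ideal_gen.intros)

lemma HCideal_smult: "x \<in> HCideal q m \<Longrightarrow> sc c * x \<in> HCideal q m"
  using HCideal_mult[of x q m "sc c" 1] by simp

lemma HCideal_uminus [simp]: "x \<in> HCideal q m \<Longrightarrow> - x \<in> HCideal q m"
  using HCideal_smult[of x q m "-1"] by (simp add: sc_uminus)

lemma relators_mono: "relators q n \<subseteq> relators q (Suc n)"
  unfolding relators_def by (rule Un_mono)+ fastforce+

lemma HCideal_Suc: "x \<in> HCideal q n \<Longrightarrow> x \<in> HCideal q (Suc n)"
  unfolding HCideal_def
proof (induction rule: ideal_gen.induct)
  case (base s)
  then show ?case using relators_mono by (blast intro: ideal_gen.base)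
next
  case (mult x a b)
  then show ?case using FA_Suc[of a n] FA_Suc[of b n] by (simp add: ideal_gen.mult)
qed (auto intro: ideal_gen.intros)

lemma alpha_relator: "r \<in> relators q m \<Longrightarrow> alpha r = r \<or> alpha r = - r"
  unfolding relators_def by (elim UnE CollectE exE conjE; hypsubst; simp add: algebra_simps)

lemma alpha_HCideal: "x \<in> HCideal q m \<Longrightarrow> alpha x \<in> HCideal q m"
  unfolding HCideal_def
proof (induction rule: ideal_gen.induct)
  case (base s)
  then have "s \<in> HCideal q m" and "- s \<in> HCideal q m"
    by (simp_all add: HCideal_relator)
  with alpha_relator[OF base] show ?case
    by (auto simp: HCideal_def)
qed (simp_all add: ideal_gen.intros)

text \<open>Equality of images in \<open>G_m\<close>.\<close>
definition hc_cong :: "fa \<Rightarrow> complex \<Rightarrow> nat \<Rightarrow> fa \<Rightarrow> bool"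
    (\<open>(_ \<equiv>\<^bsub>_,_\<^esub> _)\<close> [51, 0, 0, 51] 50) where
  "x \<equiv>\<^bsub>q,m\<^esub> y \<longleftrightarrow> x - y \<in> HCideal q m"

lemma hc_cong_refl [simp]: "x \<equiv>\<^bsub>q,m\<^esub> x"
  by (simp add: hc_cong_def)

lemma hc_cong_sym: "x \<equiv>\<^bsub>q,m\<^esub> y \<Longrightarrow> y \<equiv>\<^bsub>q,m\<^esub> x"
  unfolding hc_cong_def by (metis HCideal_uminus minus_diff_eq)

lemma hc_cong_trans [trans]: "x \<equiv>\<^bsub>q,m\<^esub> y \<Longrightarrow> y \<equiv>\<^bsub>q,m\<^esub> z \<Longrightarrow> x \<equiv>\<^bsub>q,m\<^esub> z"
  unfolding hc_cong_def using HCideal_add[of "x - y" q m "y - z"] by simp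

lemma hc_cong_add:
  "x \<equiv>\<^bsub>q,m\<^esub> x' \<Longrightarrow> y \<equiv>\<^bsub>q,m\<^esub> y' \<Longrightarrow> x + y \<equiv>\<^bsub>q,m\<^esub> x' + y'"
  unfolding hc_cong_def using HCideal_add[of "x - x'" q m "y - y'"] by (simp add: algebra_simps)

lemma hc_cong_smult: "x \<equiv>\<^bsub>q,m\<^esub> y \<Longrightarrow> sc c * x \<equiv>\<^bsub>q,m\<^esub> sc c * y"
  unfolding hc_cong_def by (metis HCideal_smult right_diff_distrib)

lemma hc_cong_sandwich:
  "x \<equiv>\<^bsub>q,m\<^esub> y \<Longrightarrow> a \<in> FA m \<Longrightarrow> b \<in> FA m \<Longrightarrow> a * x * b \<equiv>\<^bsub>q,m\<^esub> a * y * b"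
  unfolding hc_cong_def by (metis HCideal_mult left_diff_distrib right_diff_distrib)

lemma hc_cong_left: "x \<equiv>\<^bsub>q,m\<^esub> y \<Longrightarrow> a \<in> FA m \<Longrightarrow> a * x \<equiv>\<^bsub>q,m\<^esub> a * y"
  using hc_cong_sandwich[of x q m y a 1] by simp

lemma hc_cong_right: "x \<equiv>\<^bsub>q,m\<^esub> y \<Longrightarrow> b \<in> FA m \<Longrightarrow> x * b \<equiv>\<^bsub>q,m\<^esub> y * b"
  using hc_cong_sandwich[of x q m y 1 b] by simp

lemma hc_cong_mult:
  assumes "x \<equiv>\<^bsub>q,m\<^esub> x'" "y \<equiv>\<^bsub>q,m\<^esub> y'" "x' \<in> FA m" "y \<in> FA m"
  shows "x * y \<equiv>\<^bsub>q,m\<^esub> x' * y'"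
  using hc_cong_trans[OF hc_cong_right[OF assms(1,4)] hc_cong_left[OF assms(2,3)]] .

lemma hc_cong_Suc: "x \<equiv>\<^bsub>q,n\<^esub> y \<Longrightarrow> x \<equiv>\<^bsub>q,Suc n\<^esub> y"
  by (simp add: hc_cong_def HCideal_Suc)

lemma alpha_hc_cong: "x \<equiv>\<^bsub>q,m\<^esub> y \<Longrightarrow> alpha x \<equiv>\<^bsub>q,m\<^esub> alpha y"
  unfolding hc_cong_def by (metis alpha_HCideal alpha_diff)

abbreviation K :: "complex \<Rightarrow> fa" where
  "K q \<equiv> sc (q - inverse q)"

lemma relator_cong: "r - s \<in> relators q m \<Longrightarrow> r \<equiv>\<^bsub>q,m\<^esub> s"
  by (simp add: hc_cong_def HCideal_relator)

lemma tt_quadratic: "1 \<le> j \<Longrightarrow> j < m \<Longrightarrow> tt j * tt j \<equiv>\<^bsub>q,m\<^esub> K q * tt j + 1"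
  by (rule relator_cong) (auto simp: relators_def diff_diff_eq)

lemma tt_vv_cong: "1 \<le> j \<Longrightarrow> j < m \<Longrightarrow> tt j * vv j \<equiv>\<^bsub>q,m\<^esub> vv (j+1) * tt j"
  by (rule relator_cong) (auto simp: relators_def)

lemma tt_vv_Suc_cong:
  "1 \<le> j \<Longrightarrow> j < m \<Longrightarrow> tt j * vv (j+1) \<equiv>\<^bsub>q,m\<^esub> vv j * tt j - K q * (vv j - vv (j+1))"
  by (rule relator_cong) (auto simp: relators_def)

lemma tt_braid:
  "1 \<le> j \<Longrightarrow> j + 1 < m \<Longrightarrow> tt j * tt (j+1) * tt j \<equiv>\<^bsub>q,m\<^esub> tt (j+1) * tt j * tt (j+1)"
  by (rule relator_cong) (auto simp: relators_def)

lemma tt_commute: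
  "1 \<le> i \<Longrightarrow> i < m \<Longrightarrow> 1 \<le> j \<Longrightarrow> j < m \<Longrightarrow> i + 2 \<le> j \<or> j + 2 \<le> i \<Longrightarrow>
    tt i * tt j \<equiv>\<^bsub>q,m\<^esub> tt j * tt i"
  by (rule relator_cong) (auto simp: relators_def)

lemma tt_vv_commute:
  "1 \<le> j \<Longrightarrow> j < m \<Longrightarrow> 1 \<le> l \<Longrightarrow> l \<le> m \<Longrightarrow> l \<noteq> j \<Longrightarrow> l \<noteq> j + 1 \<Longrightarrow>
    tt j * vv l \<equiv>\<^bsub>q,m\<^esub> vv l * tt j"
  by (rule relator_cong) (auto simp: relators_def)

lemma vv_anticommute:
  assumes "1 \<le> j" "j \<le> m" "1 \<le> k" "k \<le> m" "j \<noteq> k"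
  shows "vv j * vv k \<equiv>\<^bsub>q,m\<^esub> - (vv k * vv j)"
proof -
  have "vv j * vv k + vv k * vv j - sc (if j = k then 2 else 0) \<in> relators q m"
    using assms unfolding relators_def by blast
  then show ?thesis
    using \<open>j \<noteq> k\<close> by (simp add: hc_cong_def HCideal_relator)
qed

lemma vv_square:
  assumes "1 \<le> j" "j \<le> m"
  shows "vv j * vv j \<equiv>\<^bsub>q,m\<^esub> 1"
proof -
  have "vv j * vv j + vv j * vv j - sc (if j = j then 2 else 0) \<in> HCideal q m"
    using assms by (intro HCideal_relator) (auto simp: relators_def)
  also have "vv j * vv j + vv j * vv j - sc (if j = j then 2 else 0) = sc 2 * (vv j * vv j - 1)"
    by (simp add: sc_eq_single_0 algebra_simps mult_2)
  finally have "sc (1/2) * (sc 2 * (vv j * vv j - 1)) \<in> HCideal q m"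
    by (rule HCideal_smult)
  also have "sc (1/2) * (sc 2 * (vv j * vv j - 1)) = vv j * vv j - 1"
    by (simp add: mult.assoc[symmetric] sc_mult)
  finally show ?thesis
    by (simp add: hc_cong_def)
qed

lemma vv_Suc_mult_cong:
  "a \<in> FA n \<Longrightarrow> vv (n+1) * a \<equiv>\<^bsub>q,n+1\<^esub> alpha a * vv (n+1)"
proof (induction a rule: FA_induct)
  case (add a b)
  then show ?case by (simp add: distrib_left distrib_right hc_cong_add)
next
  case (sc c)
  show ?case by (simp add: sc_commute)
next
  case (gen g y)
  have y: "y \<in> FA (n+1)"
    using gen(2) FA_Suc by simp
  show ?case
  proof (cases g)
    case (T j)
    with gen(1) have "1 \<le> j" "j < n"
      by (auto simp: gens_def)
    then have "tt j * vv (n+1) \<equiv>\<^bsub>q,n+1\<^esub> vv (n+1) * tt j"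
      by (intro tt_vv_commute) auto
    then have "vv (n+1) * tt j * y \<equiv>\<^bsub>q,n+1\<^esub> tt j * vv (n+1) * y"
      using y by (rule hc_cong_right[OF hc_cong_sym])
    also have "tt j * vv (n+1) * y \<equiv>\<^bsub>q,n+1\<^esub> tt j * (alpha y * vv (n+1))"
      unfolding mult.assoc using gen(3) \<open>1 \<le> j\<close> \<open>j < n\<close> by (intro hc_cong_left) auto
    finally show ?thesis
      using T by (simp add: mult.assoc)
  next
    case (V j)
    with gen(1) have "1 \<le> j" "j \<le> n"
      by (auto simp: gens_def)
    then have "vv (n+1) * vv j \<equiv>\<^bsub>q,n+1\<^esub> (- vv j) * vv (n+1)"
      using vv_anticommute[of "n+1" "n+1" j] by simp
    then have "vv (n+1) * vv j * y \<equiv>\<^bsub>q,n+1\<^esub> (- vv j) * vv (n+1) * y"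
      using y by (rule hc_cong_right)
    also have "(- vv j) * vv (n+1) * y \<equiv>\<^bsub>q,n+1\<^esub> (- vv j) * (alpha y * vv (n+1))"
      unfolding mult.assoc using gen(3) \<open>1 \<le> j\<close> \<open>j \<le> n\<close> by (intro hc_cong_left) auto
    finally show ?thesis
      using V by (simp add: mult.assoc)
  qed
qed simp

lemma mult_vv_Suc_cong:
  "b \<in> FA n \<Longrightarrow> b * vv (n+1) \<equiv>\<^bsub>q,n+1\<^esub> vv (n+1) * alpha b"
  using hc_cong_sym[OF vv_Suc_mult_cong[of "alpha b" n q]] by simp

lemma tt_mult_commute_cong:
  assumes "1 \<le> n" and "a \<in> FA (n-1)"
  shows "tt n * a \<equiv>\<^bsub>q,n+1\<^esub> a * tt n"
  using assms(2)
proof (induction a rule: FA_induct)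
  case (add a b)
  then show ?case by (simp add: distrib_left distrib_right hc_cong_add)
next
  case (sc c)
  show ?case by (simp add: sc_commute)
next
  case (gen g y)
  have "FA (n-1) \<subseteq> FA (n+1)"
    by (rule FA_mono) simp
  then have y: "y \<in> FA (n+1)" and g: "gen g \<in> FA (n+1)"
    using gen(1,2) gen_FA by auto
  have "tt n * gen g \<equiv>\<^bsub>q,n+1\<^esub> gen g * tt n"
  proof (cases g)
    case (T j)
    with gen(1) have "1 \<le> j" "j + 2 \<le> n"
      by (auto simp: gens_def)
    with T show ?thesis
      by (simp add: tt_commute)
  next
    case (V j)
    with gen(1) have "1 \<le> j" "j < n"
      by (auto simp: gens_def)
    with V show ?thesis
      by (simp add: tt_vv_commute)
  qed
  then have "tt n * gen g * y \<equiv>\<^bsub>q,n+1\<^esub> gen g * tt n * y"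
    using y by (rule hc_cong_right)
  also have "gen g * tt n * y \<equiv>\<^bsub>q,n+1\<^esub> gen g * (y * tt n)"
    unfolding mult.assoc using gen(3) g by (rule hc_cong_left)
  finally show ?case
    by (simp add: mult.assoc)
qed simp

text \<open>The preimage in the free algebra of the span of the image of \<open>S\<close> in \<open>G_m\<close>.\<close>
definition span_mod :: "complex \<Rightarrow> nat \<Rightarrow> fa set \<Rightarrow> fa set" where
  "span_mod q m S = {x. \<exists>y \<in> cspan S. x \<equiv>\<^bsub>q,m\<^esub> y}"

lemma span_mod_base: "s \<in> S \<Longrightarrow> s \<in> span_mod q m S"
  unfolding span_mod_def by (blast intro: cspan.base hc_cong_refl)

lemma span_mod_0 [simp]: "0 \<in> span_mod q m S"
  unfolding span_mod_def by (blast intro: cspan.zero hc_cong_refl)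

lemma span_mod_add: "x \<in> span_mod q m S \<Longrightarrow> y \<in> span_mod q m S \<Longrightarrow> x + y \<in> span_mod q m S"
  unfolding span_mod_def by (blast intro: cspan.add hc_cong_add)

lemma span_mod_smult: "x \<in> span_mod q m S \<Longrightarrow> sc c * x \<in> span_mod q m S"
  unfolding span_mod_def by (blast intro: cspan.smult hc_cong_smult)

lemma span_mod_uminus: "x \<in> span_mod q m S \<Longrightarrow> - x \<in> span_mod q m S"
  using span_mod_smult[of x q m S "-1"] by (simp add: sc_uminus)

lemma span_mod_diff: "x \<in> span_mod q m S \<Longrightarrow> y \<in> span_mod q m S \<Longrightarrow> x - y \<in> span_mod q m S"
  using span_mod_add[of x q m S "- y"] span_mod_uminus by simp

lemma span_mod_cong: "x \<equiv>\<^bsub>q,m\<^esub> y \<Longrightarrow> y \<in> span_mod q m S \<Longrightarrow> x \<in> span_mod q m S"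
  unfolding span_mod_def by (blast intro: hc_cong_trans)

lemma span_mod_Suc: "x \<in> span_mod q n S \<Longrightarrow> x \<in> span_mod q (Suc n) S"
  unfolding span_mod_def by (blast intro: hc_cong_Suc)

lemma span_mod_mult:
  assumes x: "x \<in> span_mod q m S" and "a \<in> FA m" "b \<in> FA m"
    and S: "\<And>s. s \<in> S \<Longrightarrow> a * s * b \<in> span_mod q m S'"
  shows "a * x * b \<in> span_mod q m S'"
proof -
  obtain y where "y \<in> cspan S" and "x \<equiv>\<^bsub>q,m\<^esub> y"
    using x by (auto simp: span_mod_def)
  from \<open>y \<in> cspan S\<close> have "a * y * b \<in> span_mod q m S'"
  proof (induction rule: cspan.induct)
    case (add y z)
    then show ?case by (simp add: distrib_left distrib_right span_mod_add)
  next
    case (smult y c)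
    then show ?case by (simp add: mult_sc_left_commute mult.assoc span_mod_smult)
  qed (simp_all add: S)
  moreover have "a * x * b \<equiv>\<^bsub>q,m\<^esub> a * y * b"
    using \<open>x \<equiv>\<^bsub>q,m\<^esub> y\<close> assms(2,3) by (rule hc_cong_sandwich)
  ultimately show ?thesis
    by (rule span_mod_cong[rotated])
qed

section \<open>A spanning set of \<open>G_(n+1)\<close>\<close>

text \<open>For \<open>n = 0\<close> there is no \<open>t_0\<close>: \<open>G_1\<close> is spanned by \<open>1\<close> and \<open>v_1\<close>,
  which starts the induction on \<open>n\<close>.\<close>
definition Chi :: "nat \<Rightarrow> fa set" where
  "Chi n = (if n = 0 then {1, vv 1} else {1, tt n, vv (n+1), vv (n+1) * tt n})"

definition Chi_prods :: "nat \<Rightarrow> fa set" where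
  "Chi_prods n = {a * \<chi> * b | a \<chi> b. a \<in> FA n \<and> b \<in> FA n \<and> \<chi> \<in> Chi n}"

abbreviation Chi_span :: "complex \<Rightarrow> nat \<Rightarrow> fa set" where
  "Chi_span q n \<equiv> span_mod q (n+1) (Chi_prods n)"

lemma one_in_Chi: "1 \<in> Chi n"
  and vv_Suc_in_Chi: "vv (n+1) \<in> Chi n"
  and tt_in_Chi: "1 \<le> n \<Longrightarrow> tt n \<in> Chi n"
  and vv_Suc_tt_in_Chi: "1 \<le> n \<Longrightarrow> vv (n+1) * tt n \<in> Chi n"
  by (simp_all add: Chi_def)

lemma Chi_FA: "\<chi> \<in> Chi n \<Longrightarrow> \<chi> \<in> FA (n+1)"
  by (auto simp: Chi_def split: if_splits)

lemma Chi_prods_in_span: "a \<in> FA n \<Longrightarrow> b \<in> FA n \<Longrightarrow> \<chi> \<in> Chi n \<Longrightarrow> a * \<chi> * b \<in> Chi_span q n"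
  by (rule span_mod_base) (auto simp: Chi_prods_def)

lemma Chi_span_sandwich:
  assumes "x \<in> Chi_span q n" "a \<in> FA n" "b \<in> FA n"
  shows "a * x * b \<in> Chi_span q n"
  using assms(1) FA_Suc[OF assms(2)] FA_Suc[OF assms(3)]
proof (rule span_mod_mult)
  fix s assume "s \<in> Chi_prods n"
  then obtain a' \<chi> b' where "s = a' * \<chi> * b'" "a' \<in> FA n" "b' \<in> FA n" "\<chi> \<in> Chi n"
    by (auto simp: Chi_prods_def)
  with assms(2,3) show "a * s * b \<in> Chi_span q n"
    using Chi_prods_in_span[of "a * a'" n "b' * b" \<chi> q] by (simp add: mult.assoc)
qed

lemma Chi_span_left: "a \<in> FA n \<Longrightarrow> x \<in> Chi_span q n \<Longrightarrow> a * x \<in> Chi_span q n"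
  using Chi_span_sandwich[of x q n a 1] by simp

lemma Chi_span_right: "x \<in> Chi_span q n \<Longrightarrow> b \<in> FA n \<Longrightarrow> x * b \<in> Chi_span q n"
  using Chi_span_sandwich[of x q n 1 b] by simp

lemma Chi_in_span: "\<chi> \<in> Chi n \<Longrightarrow> \<chi> \<in> Chi_span q n"
  using Chi_prods_in_span[of 1 n 1 \<chi> q] by simp

lemma vv_Suc_Chi_in_span:
  assumes "\<chi> \<in> Chi n"
  shows "vv (n+1) * \<chi> \<in> Chi_span q n"
proof -
  have vv_vv: "vv (n+1) * vv (n+1) * c \<equiv>\<^bsub>q,n+1\<^esub> c" if "c \<in> FA (n+1)" for c
    using hc_cong_right[OF vv_square that, of "n+1"] by simp
  consider "\<chi> = 1" | "\<chi> = vv (n+1)" | "n \<noteq> 0" "\<chi> = tt n" | "n \<noteq> 0" "\<chi> = vv (n+1) * tt n"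
    using assms by (auto simp: Chi_def split: if_splits)
  then show ?thesis
  proof cases
    case 1
    then show ?thesis using Chi_in_span[OF vv_Suc_in_Chi] by simp
  next
    case 2
    then show ?thesis
      using vv_vv[of 1] Chi_in_span[OF one_in_Chi] by (simp add: span_mod_cong)
  next
    case 3
    then show ?thesis using Chi_in_span[OF vv_Suc_tt_in_Chi] by simp
  next
    case 4
    then show ?thesis
      using vv_vv[of "tt n"] Chi_in_span[OF tt_in_Chi] by (simp add: mult.assoc[symmetric] span_mod_cong)
  qed
qed

lemma Chi_span_vv_Suc_left:
  assumes "x \<in> Chi_span q n"
  shows "vv (n+1) * x \<in> Chi_span q n"
proof -
  have "vv (n+1) * x * 1 \<in> Chi_span q n"
    using assms
  proof (rule span_mod_mult)
    fix s assume "s \<in> Chi_prods n"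
    then obtain a \<chi> b where s: "s = a * \<chi> * b" "a \<in> FA n" "b \<in> FA n" "\<chi> \<in> Chi n"
      by (auto simp: Chi_prods_def)
    have "vv (n+1) * a * (\<chi> * b) \<equiv>\<^bsub>q,n+1\<^esub> alpha a * vv (n+1) * (\<chi> * b)"
      using s FA_Suc Chi_FA by (intro hc_cong_right vv_Suc_mult_cong) auto
    moreover have "alpha a * (vv (n+1) * \<chi>) * b \<in> Chi_span q n"
      using s by (intro Chi_span_sandwich vv_Suc_Chi_in_span) auto
    ultimately show "vv (n+1) * s * 1 \<in> Chi_span q n"
      using s(1) by (simp add: mult.assoc span_mod_cong)
  qed simp_all
  then show ?thesis by simp
qed

lemma FA_in_Chi_span: "a \<in> FA n \<Longrightarrow> a \<in> Chi_span q n"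
  using Chi_span_left[OF _ Chi_in_span[OF one_in_Chi]] by simp

lemma tt_Chi_in_span:
  assumes n: "1 \<le> n" and \<chi>: "\<chi> \<in> Chi n"
  shows "tt n * \<chi> \<in> Chi_span q n"
proof -
  have FA: "vv n \<in> FA n" "K q \<in> FA n" and tt_FA: "tt n \<in> FA (n+1)"
    using n by simp_all
  note span = Chi_in_span[OF one_in_Chi] Chi_in_span[OF tt_in_Chi[OF n]]
    Chi_in_span[OF vv_Suc_in_Chi] Chi_in_span[OF vv_Suc_tt_in_Chi[OF n]] FA_in_Chi_span[OF FA(1)]
  note span_intros = span_mod_add span_mod_diff Chi_span_left
  have tt_tt: "tt n * tt n \<in> Chi_span q n"
  proof (rule span_mod_cong)
    show "tt n * tt n \<equiv>\<^bsub>q,n+1\<^esub> K q * tt n + 1"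
      using n by (intro tt_quadratic) auto
    show "K q * tt n + 1 \<in> Chi_span q n"
      using FA span by (blast intro: span_intros)
  qed
  have tt_vv_cong: "tt n * vv (n+1) \<equiv>\<^bsub>q,n+1\<^esub> vv n * tt n - K q * (vv n - vv (n+1))"
    using n tt_vv_Suc_cong[of n "n+1" q] by simp
  have tt_vv: "tt n * vv (n+1) \<in> Chi_span q n"
    using tt_vv_cong
  proof (rule span_mod_cong)
    show "vv n * tt n - K q * (vv n - vv (n+1)) \<in> Chi_span q n"
      using FA span by (blast intro: span_intros)
  qed
  have tt_vv_tt: "tt n * vv (n+1) * tt n \<in> Chi_span q n"
  proof (rule span_mod_cong)
    have "tt n * vv (n+1) * tt n \<equiv>\<^bsub>q,n+1\<^esub> (vv n * tt n - K q * (vv n - vv (n+1))) * tt n"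
      using tt_vv_cong tt_FA by (rule hc_cong_right)
    also have "\<dots> = vv n * (tt n * tt n) - K q * (vv n * tt n) + K q * (vv (n+1) * tt n)"
      by (simp add: algebra_simps)
    finally show "tt n * vv (n+1) * tt n \<equiv>\<^bsub>q,n+1\<^esub> \<dots>" .
    show "vv n * (tt n * tt n) - K q * (vv n * tt n) + K q * (vv (n+1) * tt n) \<in> Chi_span q n"
      using FA span tt_tt by (blast intro: span_intros)
  qed
  from \<chi> n consider "\<chi> = 1" | "\<chi> = tt n" | "\<chi> = vv (n+1)" | "\<chi> = vv (n+1) * tt n"
    by (auto simp: Chi_def)
  then show ?thesis
    by cases (use span tt_tt tt_vv tt_vv_tt in \<open>simp_all add: mult.assoc\<close>)
qed

lemma tt_tt_pred_Chi_in_span: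
  assumes n: "2 \<le> n" and \<chi>: "\<chi> \<in> Chi n"
  shows "tt n * tt (n-1) * \<chi> \<in> Chi_span q n"
proof -
  have n1: "1 \<le> n"
    using n by simp
  have FA: "tt (n-1) \<in> FA n" "vv n \<in> FA n" "K q \<in> FA n"
    and FA': "tt n \<in> FA (n+1)" "tt (n-1) * tt n \<in> FA (n+1)"
    using n by simp_all
  note span = Chi_in_span[OF tt_in_Chi[OF n1]] Chi_in_span[OF vv_Suc_in_Chi]
  note span_intros = span_mod_add span_mod_diff Chi_span_left Chi_span_right Chi_span_vv_Suc_left
  have tt_vv: "tt n * vv (n+1) \<in> Chi_span q n"
    using tt_Chi_in_span[OF n1 vv_Suc_in_Chi] .
  have tt_pred_vv: "tt (n-1) * vv (n+1) \<equiv>\<^bsub>q,n+1\<^esub> vv (n+1) * tt (n-1)"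
    using n by (intro tt_vv_commute) auto
  have tt_tt_pred_tt: "tt n * tt (n-1) * tt n \<in> Chi_span q n"
  proof (rule span_mod_cong)
    have "tt (n-1) * tt (n-1+1) * tt (n-1) \<equiv>\<^bsub>q,n+1\<^esub> tt (n-1+1) * tt (n-1) * tt (n-1+1)"
      using n by (intro tt_braid) auto
    from hc_cong_sym[OF this] n1
    show "tt n * tt (n-1) * tt n \<equiv>\<^bsub>q,n+1\<^esub> tt (n-1) * tt n * tt (n-1)"
      by simp
    show "tt (n-1) * tt n * tt (n-1) \<in> Chi_span q n"
      using FA span by (blast intro: span_intros)
  qed
  have tt_tt_pred_vv: "tt n * tt (n-1) * vv (n+1) \<in> Chi_span q n"
  proof (rule span_mod_cong)
    show "tt n * tt (n-1) * vv (n+1) \<equiv>\<^bsub>q,n+1\<^esub> tt n * vv (n+1) * tt (n-1)"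
      using hc_cong_left[OF tt_pred_vv FA'(1)] by (simp add: mult.assoc)
    show "tt n * vv (n+1) * tt (n-1) \<in> Chi_span q n"
      using FA tt_vv by (blast intro: span_intros)
  qed
  have tt_tt_pred_vv_tt: "tt n * tt (n-1) * (vv (n+1) * tt n) \<in> Chi_span q n"
  proof (rule span_mod_cong)
    have "tt n * tt (n-1) * (vv (n+1) * tt n) \<equiv>\<^bsub>q,n+1\<^esub> tt n * vv (n+1) * (tt (n-1) * tt n)"
      using hc_cong_sandwich[OF tt_pred_vv FA'(1,1)] by (simp add: mult.assoc)
    also have "\<dots> \<equiv>\<^bsub>q,n+1\<^esub> (vv n * tt n - K q * (vv n - vv (n+1))) * (tt (n-1) * tt n)"
      using tt_vv_Suc_cong[of n "n+1" q] n1 FA'(2) by (intro hc_cong_right) auto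
    also have "\<dots> = vv n * (tt n * tt (n-1) * tt n) - K q * (vv n * (tt (n-1) * tt n))
        + K q * (vv (n+1) * (tt (n-1) * tt n))"
      by (simp add: algebra_simps)
    finally show "tt n * tt (n-1) * (vv (n+1) * tt n) \<equiv>\<^bsub>q,n+1\<^esub> \<dots>" .
    show "vv n * (tt n * tt (n-1) * tt n) - K q * (vv n * (tt (n-1) * tt n))
        + K q * (vv (n+1) * (tt (n-1) * tt n)) \<in> Chi_span q n"
      using FA span tt_tt_pred_tt by (blast intro: span_intros)
  qed
  from \<chi> n consider "\<chi> = 1" | "\<chi> = tt n" | "\<chi> = vv (n+1)" | "\<chi> = vv (n+1) * tt n"
    by (auto simp: Chi_def)
  then show ?thesis
    by cases (use FA span tt_tt_pred_tt tt_tt_pred_vv tt_tt_pred_vv_tt Chi_span_right in auto)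
qed

text \<open>The relation \<open>t_n v_n = v_(n+1) t_n\<close> moves a factor \<open>v_n\<close> of \<open>\<chi>'\<close> to the left,
  where \<open>Chi_span_vv_Suc_left\<close> absorbs it.\<close>
lemma tt_Chi_pred_Chi_in_span:
  assumes n: "1 \<le> n" and \<chi>': "\<chi>' \<in> Chi (n-1)" and \<chi>: "\<chi> \<in> Chi n"
  shows "tt n * \<chi>' * \<chi> \<in> Chi_span q n"
proof -
  have tt_vv: "tt n * vv n * c \<equiv>\<^bsub>q,n+1\<^esub> vv (n+1) * (tt n * c)" if "c \<in> FA (n+1)" for c
    using hc_cong_right[OF tt_vv_cong[of n "n+1" q] that] n by (simp add: mult.assoc)
  have FA: "\<chi> \<in> FA (n+1)"
    using Chi_FA[OF \<chi>] .
  consider "\<chi>' = 1" | "\<chi>' = vv n" | "2 \<le> n" "\<chi>' = tt (n-1)" | "2 \<le> n" "\<chi>' = vv n * tt (n-1)"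
    using \<chi>' n by (cases "n = 1") (auto simp: Chi_def)
  then show ?thesis
  proof cases
    case 1
    then show ?thesis using tt_Chi_in_span[OF n \<chi>] by simp
  next
    case 2
    then show ?thesis
      using tt_vv[OF FA] Chi_span_vv_Suc_left[OF tt_Chi_in_span[OF n \<chi>]]
      by (simp add: span_mod_cong)
  next
    case 3
    then show ?thesis using tt_tt_pred_Chi_in_span[OF _ \<chi>] by simp
  next
    case 4
    then have "tt (n-1) * \<chi> \<in> FA (n+1)"
      using FA by simp
    with 4 show ?thesis
      using tt_vv[of "tt (n-1) * \<chi>"] Chi_span_vv_Suc_left[OF tt_tt_pred_Chi_in_span[OF _ \<chi>]]
      by (simp add: span_mod_cong mult.assoc)
  qed
qed

lemma mult_Chi_commute:
  assumes n: "1 \<le> n" and b: "b \<in> FA (n-1)" and \<chi>: "\<chi> \<in> Chi n"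
  obtains b' where "b' \<in> FA n" "b * \<chi> \<equiv>\<^bsub>q,n+1\<^esub> \<chi> * b'"
proof -
  have "FA (n-1) \<subseteq> FA n"
    by (rule FA_mono) simp
  with b have "b \<in> FA n" by blast
  have tt: "b * tt n \<equiv>\<^bsub>q,n+1\<^esub> tt n * b" and tt_alpha: "tt n * alpha b \<equiv>\<^bsub>q,n+1\<^esub> alpha b * tt n"
    using tt_mult_commute_cong[OF n b] tt_mult_commute_cong[OF n alpha_FA[OF b]]
    by (simp_all add: hc_cong_sym)
  have vv: "b * vv (n+1) \<equiv>\<^bsub>q,n+1\<^esub> vv (n+1) * alpha b"
    using \<open>b \<in> FA n\<close> by (rule mult_vv_Suc_cong)
  have vv_tt: "b * (vv (n+1) * tt n) \<equiv>\<^bsub>q,n+1\<^esub> vv (n+1) * tt n * alpha b"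
  proof -
    have "b * (vv (n+1) * tt n) \<equiv>\<^bsub>q,n+1\<^esub> vv (n+1) * alpha b * tt n"
      using hc_cong_right[OF vv, of "tt n"] n by (simp add: mult.assoc)
    also have "\<dots> \<equiv>\<^bsub>q,n+1\<^esub> vv (n+1) * (tt n * alpha b)"
      unfolding mult.assoc using tt_alpha[THEN hc_cong_sym] by (rule hc_cong_left) simp
    finally show ?thesis
      by (simp add: mult.assoc)
  qed
  from \<chi> n consider "\<chi> = 1" | "\<chi> = tt n" | "\<chi> = vv (n+1)" | "\<chi> = vv (n+1) * tt n"
    by (auto simp: Chi_def)
  then show ?thesis
    by cases (use that \<open>b \<in> FA n\<close> tt vv vv_tt in \<open>auto intro: alpha_FA\<close>)
qed

lemma gens_Suc_cases: "g \<in> gens (n+1) \<Longrightarrow> g \<in> gens n \<or> g = V (n+1) \<or> (1 \<le> n \<and> g = T n)"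
  by (auto simp: gens_def)

lemma Chi_span_tt_left:
  assumes n: "1 \<le> n" and IH: "FA n \<subseteq> span_mod q n (Chi_prods (n-1))"
    and x: "x \<in> Chi_span q n"
  shows "tt n * x \<in> Chi_span q n"
proof -
  have FA_pred: "FA (n-1) \<subseteq> FA (n+1)" "FA (n-1) \<subseteq> FA n"
    by (simp_all add: FA_mono)
  have "tt n * x * 1 \<in> Chi_span q n"
    using x
  proof (rule span_mod_mult)
    fix s assume "s \<in> Chi_prods n"
    then obtain a \<chi> b where s: "s = a * \<chi> * b" "a \<in> FA n" "b \<in> FA n" "\<chi> \<in> Chi n"
      by (auto simp: Chi_prods_def)
    have \<chi>b: "\<chi> * b \<in> FA (n+1)"
      using Chi_FA[OF s(4)] FA_Suc[OF s(3)] by simp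
    have "a \<in> span_mod q (n+1) (Chi_prods (n-1))"
      using IH s(2) span_mod_Suc by auto
    then have "tt n * a * (\<chi> * b) \<in> Chi_span q n"
    proof (rule span_mod_mult)
      fix s' assume "s' \<in> Chi_prods (n-1)"
      then obtain a' \<chi>' b' where s': "s' = a' * \<chi>' * b'" "a' \<in> FA (n-1)" "b' \<in> FA (n-1)"
          "\<chi>' \<in> Chi (n-1)"
        by (auto simp: Chi_prods_def)
      obtain b'' where b'': "b'' \<in> FA n" "b' * \<chi> \<equiv>\<^bsub>q,n+1\<^esub> \<chi> * b''"
        using mult_Chi_commute[OF n s'(3) s(4)] .
      have \<chi>': "\<chi>' \<in> FA (n+1)"
        using Chi_FA[OF s'(4)] n FA_mono[of n "n+1"] by auto
      have commuted: "tt n * a' * (\<chi>' * (b' * \<chi>)) \<equiv>\<^bsub>q,n+1\<^esub> a' * tt n * (\<chi>' * (\<chi> * b''))"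
        using s'(2,3) s(4) \<chi>' FA_pred n Chi_FA
        by (intro hc_cong_mult[OF tt_mult_commute_cong[OF n s'(2)] hc_cong_left[OF b''(2) \<chi>']]) auto
      have "tt n * s' * (\<chi> * b) \<equiv>\<^bsub>q,n+1\<^esub> a' * (tt n * \<chi>' * \<chi>) * (b'' * b)"
        using hc_cong_right[OF commuted FA_Suc[OF s(3)]] s'(1) by (simp add: mult.assoc)
      moreover have "a' * (tt n * \<chi>' * \<chi>) * (b'' * b) \<in> Chi_span q n"
        using s'(2) b''(1) s(3) FA_pred
        by (intro Chi_span_sandwich[OF tt_Chi_pred_Chi_in_span[OF n s'(4) s(4)]]) auto
      ultimately show "tt n * s' * (\<chi> * b) \<in> Chi_span q n"
        by (rule span_mod_cong)
    qed (use n \<chi>b in simp_all)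
    then show "tt n * s * 1 \<in> Chi_span q n"
      using s(1) by (simp add: mult.assoc)
  qed (use n in simp_all)
  then show ?thesis
    by simp
qed

lemma FA_Suc_subset_Chi_span_step:
  assumes IH: "1 \<le> n \<Longrightarrow> FA n \<subseteq> span_mod q n (Chi_prods (n-1))"
  shows "FA (n+1) \<subseteq> Chi_span q n"
proof
  fix x assume "x \<in> FA (n+1)"
  then show "x \<in> Chi_span q n"
  proof (induction rule: FA_induct)
    case (add a b)
    then show ?case by (rule span_mod_add)
  next
    case (sc c)
    show ?case
      using span_mod_smult[OF FA_in_Chi_span[OF FA_1]] by simp
  next
    case (gen g y)
    then consider "g \<in> gens n" | "g = V (n+1)" | "1 \<le> n" "g = T n"
      using gens_Suc_cases by blast
    then show ?case
    proof cases
      case 1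
      then show ?thesis using Chi_span_left[OF gen_FA gen(3)] by simp
    next
      case 2
      then show ?thesis using Chi_span_vv_Suc_left[OF gen(3)] by simp
    next
      case 3
      then show ?thesis using Chi_span_tt_left[OF _ IH gen(3)] by simp
    qed
  qed simp
qed

lemma FA_Suc_subset_Chi_span: "FA (n+1) \<subseteq> Chi_span q n"
proof (induction n)
  case 0
  then show ?case by (intro FA_Suc_subset_Chi_span_step) simp
next
  case (Suc n)
  then show ?case by (intro FA_Suc_subset_Chi_span_step) simp
qed

section \<open>A spanning set of the even part\<close>

definition even_part :: "fa \<Rightarrow> fa" where
  "even_part x = sc (1/2) * (x + alpha x)"

definition odd_part :: "fa \<Rightarrow> fa" where
  "odd_part x = sc (1/2) * (x - alpha x)"

lemma sc_half_add_sc_half: "sc (1/2) * x + sc (1/2) * x = x"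
  by (simp flip: distrib_right sc_add)

lemma even_part_add: "even_part (x + y) = even_part x + even_part y"
  by (simp add: even_part_def algebra_simps)

lemma even_part_smult: "even_part (sc c * x) = sc c * even_part x"
  by (simp add: even_part_def distrib_left mult.assoc[symmetric] sc_mult mult.commute)

lemma even_part_fixed: "alpha x = x \<Longrightarrow> even_part x = x"
  by (simp add: even_part_def distrib_left sc_half_add_sc_half)

lemma even_part_anti: "alpha x = - x \<Longrightarrow> even_part x = 0"
  by (simp add: even_part_def)

lemma alpha_even_part [simp]: "alpha (even_part x) = even_part x"
  by (simp add: even_part_def add.commute)

lemma alpha_odd_part [simp]: "alpha (odd_part x) = - odd_part x"
  by (simp add: odd_part_def algebra_simps)

lemma even_part_add_odd_part: "even_part x + odd_part x = x"
proof -
  have "even_part x + odd_part x = sc (1/2) * x + sc (1/2) * x"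
    by (simp add: even_part_def odd_part_def algebra_simps)
  then show ?thesis
    by (simp add: sc_half_add_sc_half)
qed

lemma even_part_FA [simp]: "x \<in> FA n \<Longrightarrow> even_part x \<in> FA n"
  and odd_part_FA [simp]: "x \<in> FA n \<Longrightarrow> odd_part x \<in> FA n"
  by (simp_all add: even_part_def odd_part_def)

lemma even_part_mult_fixed:
  "alpha p = p \<Longrightarrow> alpha r = r \<Longrightarrow> even_part (p * x * r) = p * even_part x * r"
  by (simp add: even_part_def algebra_simps mult_sc_left_commute)

lemma even_part_hc_cong: "x \<equiv>\<^bsub>q,m\<^esub> y \<Longrightarrow> even_part x \<equiv>\<^bsub>q,m\<^esub> even_part y"
  unfolding even_part_def by (intro hc_cong_smult hc_cong_add alpha_hc_cong)

lemma hc_cong_even_part: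
  assumes "alpha x \<equiv>\<^bsub>q,m\<^esub> x"
  shows "x \<equiv>\<^bsub>q,m\<^esub> even_part x"
proof -
  have "x \<equiv>\<^bsub>q,m\<^esub> sc (1/2) * (x + x)"
    by (simp add: distrib_left sc_half_add_sc_half)
  also have "\<dots> \<equiv>\<^bsub>q,m\<^esub> sc (1/2) * (x + alpha x)"
    using hc_cong_sym[OF assms] by (intro hc_cong_smult hc_cong_add hc_cong_refl)
  finally show ?thesis
    by (simp add: even_part_def)
qed

lemma Even_intro: "p \<in> FA n \<Longrightarrow> alpha p = p \<Longrightarrow> p \<in> Even q n"
  by (simp add: Even_def)

lemma Even_mult:
  assumes "a \<in> Even q n" "b \<in> Even q n"
  shows "a * b \<in> Even q n"
proof -
  have "alpha (a * b) - a * b = 1 * (alpha a - a) * alpha b + a * (alpha b - b) * 1"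
    by (simp add: algebra_simps)
  moreover have "1 * (alpha a - a) * alpha b + a * (alpha b - b) * 1 \<in> HCideal q n"
    using assms by (intro HCideal_add[OF HCideal_mult HCideal_mult]) (auto simp: Even_def)
  ultimately show ?thesis
    using assms by (simp add: Even_def)
qed

definition Chi_even :: "nat \<Rightarrow> fa set" where
  "Chi_even n = {1, tt n, vv n * vv (n+1), vv n * vv (n+1) * tt n}"

definition Chi_even_prods :: "complex \<Rightarrow> nat \<Rightarrow> fa set" where
  "Chi_even_prods q n = {a * \<chi> * b | a \<chi> b. a \<in> Even q n \<and> b \<in> Even q n \<and> \<chi> \<in> Chi_even n}"

abbreviation Chi_even_span :: "complex \<Rightarrow> nat \<Rightarrow> fa set" where
  "Chi_even_span q n \<equiv> span_mod q (n+1) (Chi_even_prods q n)"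

lemma Chi_even_span_sandwich:
  assumes "x \<in> Chi_even_span q n" "a \<in> Even q n" "b \<in> Even q n"
  shows "a * x * b \<in> Chi_even_span q n"
  using assms(1) FA_Suc[of a n] FA_Suc[of b n]
proof (rule span_mod_mult)
  show "a \<in> FA n" "b \<in> FA n"
    using assms(2,3) by (simp_all add: Even_def)
  fix s assume "s \<in> Chi_even_prods q n"
  then obtain a' \<chi> b' where "s = a' * \<chi> * b'" "a' \<in> Even q n" "b' \<in> Even q n" "\<chi> \<in> Chi_even n"
    by (auto simp: Chi_even_prods_def)
  with assms(2,3) have "a * s * b = (a * a') * \<chi> * (b' * b)" "a * a' \<in> Even q n" "b' * b \<in> Even q n"
    by (simp_all add: mult.assoc Even_mult)
  with \<open>\<chi> \<in> Chi_even n\<close> show "a * s * b \<in> Chi_even_span q n"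
    by (auto simp: Chi_even_prods_def intro: span_mod_base)
qed

lemma Chi_even_in_span: "\<chi> \<in> Chi_even n \<Longrightarrow> \<chi> \<in> Chi_even_span q n"
  using Even_intro[OF FA_1 alpha_1] by (intro span_mod_base) (force simp: Chi_even_prods_def)

lemma even_part_vv_Chi_vv_in_span:
  assumes n: "1 \<le> n" and "u \<in> {1, vv n}" "w \<in> {1, vv n}" "\<chi> \<in> Chi n"
  shows "even_part (u * \<chi> * w) \<in> Chi_even_span q n"
proof -
  have FA: "vv n \<in> FA (n+1)" "tt n \<in> FA (n+1)" "vv (n+1) \<in> FA (n+1)"
    using n by simp_all
  note span = Chi_even_in_span[of _ n q, unfolded Chi_even_def]
  have vv_vv: "vv n * vv n \<equiv>\<^bsub>q,n+1\<^esub> 1"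
    using n by (intro vv_square) auto
  have "vv (n+1) * vv n \<in> Chi_even_span q n"
  proof (rule span_mod_cong)
    show "vv (n+1) * vv n \<equiv>\<^bsub>q,n+1\<^esub> - (vv n * vv (n+1))"
      using n by (intro vv_anticommute) auto
  qed (intro span_mod_uminus span; simp)
  moreover have "vv (n+1) * tt n * vv n \<in> Chi_even_span q n"
  proof (rule span_mod_cong)
    have "vv (n+1) * tt n * vv n \<equiv>\<^bsub>q,n+1\<^esub> vv (n+1) * (vv (n+1) * tt n)"
      unfolding mult.assoc using tt_vv_cong[of n "n+1" q] n FA by (intro hc_cong_left) auto
    also have "\<dots> \<equiv>\<^bsub>q,n+1\<^esub> 1 * tt n"
      unfolding mult.assoc[symmetric] using vv_square[of "n+1" "n+1" q] FA by (intro hc_cong_right) auto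
    finally show "vv (n+1) * tt n * vv n \<equiv>\<^bsub>q,n+1\<^esub> tt n"
      by simp
  qed (intro span; simp)
  moreover have "vv n * vv n \<in> Chi_even_span q n"
    using vv_vv by (rule span_mod_cong) (intro span; simp)
  moreover have "vv n * tt n * vv n \<in> Chi_even_span q n"
  proof (rule span_mod_cong)
    show "vv n * tt n * vv n \<equiv>\<^bsub>q,n+1\<^esub> vv n * vv (n+1) * tt n"
      unfolding mult.assoc using tt_vv_cong[of n "n+1" q] n FA by (intro hc_cong_left) auto
  qed (intro span; simp)
  ultimately show ?thesis
    using assms span[of 1] span[of "tt n"] span[of "vv n * vv (n+1)"] span[of "vv n * vv (n+1) * tt n"]
    by (auto simp: Chi_def even_part_fixed even_part_anti mult.assoc)
qed

lemma even_part_Chi_prods_in_span: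
  assumes n: "1 \<le> n" and s: "s \<in> Chi_prods n"
  shows "even_part s \<in> Chi_even_span q n"
proof -
  obtain a \<chi> b where s_eq: "s = a * \<chi> * b" and a: "a \<in> FA n" and b: "b \<in> FA n"
    and \<chi>: "\<chi> \<in> Chi n"
    using s by (auto simp: Chi_prods_def)
  define v where "v = vv n"
  define p0 where "p0 = even_part a"
  define p1 where "p1 = odd_part a * v"
  define r0 where "r0 = even_part b"
  define r1 where "r1 = v * odd_part b"
  have v: "v \<in> FA n" "alpha v = - v"
    using n by (simp_all add: v_def)
  have fixed: "alpha p0 = p0" "alpha p1 = p1" "alpha r0 = r0" "alpha r1 = r1"
    using v by (simp_all add: p0_def p1_def r0_def r1_def)
  have FA: "p0 \<in> FA n" "p1 \<in> FA n" "r0 \<in> FA n" "r1 \<in> FA n"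
    using a b v by (simp_all add: p0_def p1_def r0_def r1_def)
  have even: "p0 \<in> Even q n" "p1 \<in> Even q n" "r0 \<in> Even q n" "r1 \<in> Even q n"
    using FA fixed by (simp_all add: Even_intro)
  have v_v: "v * v \<equiv>\<^bsub>q,n+1\<^esub> 1"
    using n by (simp add: v_def vv_square)
  have a_cong: "a \<equiv>\<^bsub>q,n+1\<^esub> p0 + p1 * v"
  proof -
    have "a = even_part a + odd_part a * 1"
      by (simp add: even_part_add_odd_part)
    also have "\<dots> \<equiv>\<^bsub>q,n+1\<^esub> even_part a + odd_part a * (v * v)"
      using a FA_Suc by (intro hc_cong_add hc_cong_refl hc_cong_left[OF hc_cong_sym[OF v_v]]) auto
    finally show ?thesis
      by (simp add: p0_def p1_def mult.assoc)
  qed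
  have b_cong: "b \<equiv>\<^bsub>q,n+1\<^esub> r0 + v * r1"
  proof -
    have "b = even_part b + 1 * odd_part b"
      by (simp add: even_part_add_odd_part)
    also have "\<dots> \<equiv>\<^bsub>q,n+1\<^esub> even_part b + v * v * odd_part b"
      using b FA_Suc by (intro hc_cong_add hc_cong_refl hc_cong_right[OF hc_cong_sym[OF v_v]]) auto
    finally show ?thesis
      by (simp add: r0_def r1_def mult.assoc)
  qed
  have "s \<equiv>\<^bsub>q,n+1\<^esub> (p0 + p1 * v) * \<chi> * (r0 + v * r1)"
    unfolding s_eq
    using a b v FA Chi_FA[OF \<chi>] FA_Suc
    by (intro hc_cong_mult[OF hc_cong_mult[OF a_cong hc_cong_refl] b_cong]) auto
  then have "even_part s \<equiv>\<^bsub>q,n+1\<^esub> even_part ((p0 + p1 * v) * \<chi> * (r0 + v * r1))"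
    by (rule even_part_hc_cong)
  also have "(p0 + p1 * v) * \<chi> * (r0 + v * r1)
      = p0 * (1 * \<chi> * 1) * r0 + p0 * (1 * \<chi> * v) * r1 + p1 * (v * \<chi> * 1) * r0 + p1 * (v * \<chi> * v) * r1"
    by (simp add: algebra_simps)
  also have "even_part \<dots> = p0 * even_part (1 * \<chi> * 1) * r0 + p0 * even_part (1 * \<chi> * v) * r1
      + p1 * even_part (v * \<chi> * 1) * r0 + p1 * even_part (v * \<chi> * v) * r1"
    using fixed by (simp add: even_part_add even_part_mult_fixed)
  finally have "even_part s \<equiv>\<^bsub>q,n+1\<^esub> \<dots>" .
  moreover have parts: "even_part (u * \<chi> * w) \<in> Chi_even_span q n"
    if "u \<in> {1, v}" "w \<in> {1, v}" for u w
    using even_part_vv_Chi_vv_in_span[OF n _ _ \<chi>] that by (simp add: v_def)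
  have "p0 * even_part (1 * \<chi> * 1) * r0 + p0 * even_part (1 * \<chi> * v) * r1
      + p1 * even_part (v * \<chi> * 1) * r0 + p1 * even_part (v * \<chi> * v) * r1 \<in> Chi_even_span q n"
    using even by (intro span_mod_add Chi_even_span_sandwich parts) simp_all
  ultimately show ?thesis
    by (rule span_mod_cong)
qed

lemma Even_Suc_subset_Chi_even_span:
  assumes n: "1 \<le> n"
  shows "Even q (n+1) \<subseteq> Chi_even_span q n"
proof
  fix x assume "x \<in> Even q (n+1)"
  then have x: "x \<in> FA (n+1)" and x_fixed: "alpha x \<equiv>\<^bsub>q,n+1\<^esub> x"
    by (simp_all add: Even_def hc_cong_def)
  from x_fixed have "x \<equiv>\<^bsub>q,n+1\<^esub> even_part x"
    by (rule hc_cong_even_part)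
  moreover obtain y where y: "y \<in> cspan (Chi_prods n)" "x \<equiv>\<^bsub>q,n+1\<^esub> y"
    using FA_Suc_subset_Chi_span[of n q] x unfolding span_mod_def by blast
  then have "even_part x \<equiv>\<^bsub>q,n+1\<^esub> even_part y"
    by (intro even_part_hc_cong)
  moreover from y(1) have "even_part y \<in> Chi_even_span q n"
  proof (induction rule: cspan.induct)
    case zero
    then show ?case by (simp add: even_part_def)
  next
    case (base s)
    then show ?case by (rule even_part_Chi_prods_in_span[OF n])
  next
    case (add y z)
    then show ?case by (simp add: even_part_add span_mod_add)
  next
    case (smult y c)
    then show ?case by (simp add: even_part_smult span_mod_smult)
  qed
  ultimately show "x \<in> Chi_even_span q n"
    by (blast intro: span_mod_cong hc_cong_trans)
qed

theorem proposition2p15: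
  fixes q :: complex and n :: nat
  assumes "q \<noteq> 0" and "1 \<le> n"
  shows "(\<forall>x \<in> FA (n+1). \<exists>y \<in> cspan {a * \<chi> * b | a \<chi> b. a \<in> FA n \<and> b \<in> FA n \<and>
                 \<chi> \<in> {1, tt n, vv (n+1), vv (n+1) * tt n}}.
            x - y \<in> HCideal q (n+1))
       \<and> (\<forall>x \<in> Even q (n+1). \<exists>y \<in> cspan {a * \<chi> * b | a \<chi> b. a \<in> Even q n \<and> b \<in> Even q n \<and>
                 \<chi> \<in> {1, tt n, vv n * vv (n+1), vv n * vv (n+1) * tt n}}.
            x - y \<in> HCideal q (n+1))"
proof -
  have Chi_n: "Chi n = {1, tt n, vv (n+1), vv (n+1) * tt n}"
    using assms(2) by (simp add: Chi_def)
  show ?thesis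
    using FA_Suc_subset_Chi_span[of n q] Even_Suc_subset_Chi_even_span[OF assms(2), of q]
    unfolding span_mod_def hc_cong_def Chi_prods_def Chi_even_prods_def Chi_even_def Chi_n
    by blast
qed

end
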